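(* Let $d,N\in\mathbb{N}$, $\gamma_1,\dots,\gamma_N\in\mathbb{R}$, let $(\Omega,\mathcal{F},\mathbb{P})$ be a probability space, let $X_n\colon\Omega\to\mathbb{R}^d$, $n\in\{1,\dots,N\}$, be independent random variables, let $m\in\{1,\dots,N\}$ satisfy $\gamma_m\neq0$, and assume that $X_m$ is non-degenerate. Then $\sum_{n=1}^N\gamma_nX_n$ is non-degenerate.
   Context: For a Borel measure $\mu$ on $\mathbb{R}^d$, $\operatorname{supp}(\mu)=\{x\in\mathbb{R}^d\colon\mu(A)>0\text{ for every open }A\ni x\}$. For a random variable $X$, $\operatorname{supp}(X)=\operatorname{supp}(\mathbb{P}_X)$ where $\mathbb{P}_X$ is the law of $X$. $X$ is called non-degenerate if the interior of $\operatorname{supp}(X)$ is non-empty. *)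

theory Defs
  imports "HOL-Probability.Probability"
begin

definition measure_supp :: "'a::topological_space measure \<Rightarrow> 'a set" where
  "measure_supp \<mu> = {x. \<forall>A. open A \<and> x \<in> A \<longrightarrow> emeasure \<mu> A > 0}"

definition rv_supp :: "'w measure \<Rightarrow> ('w \<Rightarrow> 'a::topological_space) \<Rightarrow> 'a set" where
  "rv_supp M X = measure_supp (distr M borel X)"

definition non_degenerate :: "'w measure \<Rightarrow> ('w \<Rightarrow> 'a::topological_space) \<Rightarrow> bool" where
  "non_degenerate M X \<longleftrightarrow> interior (rv_supp M X) \<noteq> {}"

end

(* Write the sum as Y + c X_m with c = gamma_m and Y independent of X_m. The support of Y is
   nonempty; for y in it and x in the support of X_m, independence makes every product of
   neighbourhoods of x and y charged, so y + c x lies in the support of the sum. Hence the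
   support of the sum contains the image of the interior of supp X_m under the affine
   homeomorphism x |-> y + c x, which is a nonempty open set. *)
theory Submission
  imports Defs
begin

lemma (in finite_measure) in_rv_supp_iff:
  assumes "Y \<in> borel_measurable M"
  shows "y \<in> rv_supp M Y \<longleftrightarrow> (\<forall>A. open A \<and> y \<in> A \<longrightarrow> measure M (Y -` A \<inter> space M) > 0)"
proof -
  have "emeasure (distr M borel Y) A = ennreal (measure M (Y -` A \<inter> space M))" if "open A" for A
    using that assms by (simp add: emeasure_distr emeasure_eq_measure)
  then show ?thesis
    unfolding rv_supp_def measure_supp_def by auto
qed

text \<open>If no point were in the support, every point would have a null open neighbourhood;
  by Lindelof countably many of them cover the space, so the whole space would be null.\<close>
lemma (in prob_space) rv_supp_nonempty:
  fixes Y :: "'a \<Rightarrow> 'b::second_countable_topology"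
  assumes Y: "Y \<in> borel_measurable M"
  shows "rv_supp M Y \<noteq> {}"
proof
  assume "rv_supp M Y = {}"
  then have "\<forall>y. \<exists>A. open A \<and> y \<in> A \<and> measure M (Y -` A \<inter> space M) = 0"
    using in_rv_supp_iff[OF Y] by (metis empty_iff measure_nonneg order_less_le)
  then obtain A where A: "\<And>y. open (A y)" "\<And>y. y \<in> A y"
      "\<And>y. measure M (Y -` A y \<inter> space M) = 0"
    by metis
  obtain \<F> where \<F>: "\<F> \<subseteq> range A" "countable \<F>" "\<Union>\<F> = \<Union>(range A)"
    using Lindelof[of "range A"] A(1) by blast
  have cover: "(\<Union>B\<in>\<F>. Y -` B \<inter> space M) = space M"
    using \<F>(3) A(2) by blast
  have "(\<Union>B\<in>\<F>. Y -` B \<inter> space M) \<in> null_sets M"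
  proof (rule null_sets_UN')
    fix B assume "B \<in> \<F>"
    then obtain y where "B = A y" using \<F>(1) by blast
    then show "Y -` B \<inter> space M \<in> null_sets M"
      using A(1,3)[of y] Y by (simp add: null_sets_def emeasure_eq_measure borel_open measurable_sets)
  qed fact
  then have "space M \<in> null_sets M"
    by (simp only: cover)
  then show False
    by (simp add: null_sets_def emeasure_space_1)
qed

lemma (in prob_space) rv_supp_indep_continuous:
  fixes Z Y :: "'a \<Rightarrow> 'b::second_countable_topology"
    and H :: "'b \<Rightarrow> 'b \<Rightarrow> 'c::topological_space"
  assumes indep: "indep_var borel Z borel Y"
    and H: "continuous_on UNIV (\<lambda>p. H (fst p) (snd p))"
    and x: "x \<in> rv_supp M Z" and y: "y \<in> rv_supp M Y"
  shows "H x y \<in> rv_supp M (\<lambda>\<omega>. H (Z \<omega>) (Y \<omega>))"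
proof -
  have Z: "Z \<in> borel_measurable M" and Y: "Y \<in> borel_measurable M"
    using indep by (auto simp: indep_var_def indep_vars_def split: bool.splits)
  have S: "(\<lambda>\<omega>. H (Z \<omega>) (Y \<omega>)) \<in> borel_measurable M"
    using Z Y H by (rule borel_measurable_continuous_Pair)
  show ?thesis
    unfolding in_rv_supp_iff[OF S]
  proof safe
    fix A assume A: "open A" "H x y \<in> A"
    have "open ((\<lambda>p. H (fst p) (snd p)) -` A)"
      using H A(1) by (simp add: continuous_on_open_vimage)
    moreover have "(x, y) \<in> (\<lambda>p. H (fst p) (snd p)) -` A"
      using A(2) by simp
    ultimately obtain U V where UV: "open U" "open V" "(x, y) \<in> U \<times> V"
        "U \<times> V \<subseteq> (\<lambda>p. H (fst p) (snd p)) -` A"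
      by (rule open_prod_elim)
    have "0 < prob (Z -` U \<inter> space M) * prob (Y -` V \<inter> space M)"
      using x y UV(1-3) by (simp add: in_rv_supp_iff[OF Z] in_rv_supp_iff[OF Y])
    also have "\<dots> = prob ((\<lambda>\<omega>. (Z \<omega>, Y \<omega>)) -` (U \<times> V) \<inter> space M)"
      using indep UV(1,2) by (simp add: indep_varD)
    also have "\<dots> \<le> prob ((\<lambda>\<omega>. H (Z \<omega>) (Y \<omega>)) -` A \<inter> space M)"
      using UV(4) S A(1) by (intro finite_measure_mono) (auto simp: borel_open measurable_sets)
    finally show "0 < prob ((\<lambda>\<omega>. H (Z \<omega>) (Y \<omega>)) -` A \<inter> space M)" .
  qed
qed

lemma (in prob_space) indep_var_component_sum:
  fixes X :: "'i \<Rightarrow> 'a \<Rightarrow> 'b::{second_countable_topology, topological_comm_monoid_add}"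
    and g :: "'i \<Rightarrow> 'b \<Rightarrow> 'b"
  assumes indep: "indep_vars (\<lambda>_. borel) X I" and m: "m \<in> I"
    and [measurable]: "\<And>n. g n \<in> borel_measurable borel"
  shows "indep_var borel (X m) borel (\<lambda>\<omega>. \<Sum>n\<in>I - {m}. g n (X n \<omega>))"
proof -
  have "indep_var (PiM {m} (\<lambda>_. borel)) (\<lambda>\<omega>. restrict (\<lambda>i. X i \<omega>) {m})
      (PiM (I - {m}) (\<lambda>_. borel)) (\<lambda>\<omega>. restrict (\<lambda>i. X i \<omega>) (I - {m}))"
    using m by (intro indep_var_restrict[OF indep]) auto
  then have "indep_var borel ((\<lambda>f. f m) \<circ> (\<lambda>\<omega>. restrict (\<lambda>i. X i \<omega>) {m}))
      borel ((\<lambda>f. \<Sum>n\<in>I - {m}. g n (f n)) \<circ> (\<lambda>\<omega>. restrict (\<lambda>i. X i \<omega>) (I - {m})))"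
    by (rule indep_var_compose) measurable
  moreover have "(\<lambda>f. \<Sum>n\<in>I - {m}. g n (f n)) \<circ> (\<lambda>\<omega>. restrict (\<lambda>i. X i \<omega>) (I - {m}))
      = (\<lambda>\<omega>. \<Sum>n\<in>I - {m}. g n (X n \<omega>))"
    by (auto intro!: sum.cong)
  ultimately show ?thesis
    by (simp add: comp_def)
qed

theorem corollary6p12:
  fixes M :: "'w measure"
    and X :: "nat \<Rightarrow> 'w \<Rightarrow> 'a::euclidean_space"
    and \<gamma> :: "nat \<Rightarrow> real"
    and N m :: nat
  assumes "prob_space M"
    and "prob_space.indep_vars M (\<lambda>_. borel) X {1..N}"
    and "m \<in> {1..N}"
    and "\<gamma> m \<noteq> 0"
    and "non_degenerate M (X m)"
  shows "non_degenerate M (\<lambda>\<omega>. \<Sum>n\<in>{1..N}. \<gamma> n *\<^sub>R X n \<omega>)"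
proof -
  interpret prob_space M by fact
  define Y where "Y = (\<lambda>\<omega>. \<Sum>n\<in>{1..N} - {m}. \<gamma> n *\<^sub>R X n \<omega>)"
  have indep: "indep_var borel (X m) borel Y"
    unfolding Y_def using assms(2,3) by (rule indep_var_component_sum) simp
  then obtain y where y: "y \<in> rv_supp M Y"
    using rv_supp_nonempty by (auto simp: indep_var_def indep_vars_def split: bool.splits)
  have sum_eq: "(\<lambda>\<omega>. \<Sum>n\<in>{1..N}. \<gamma> n *\<^sub>R X n \<omega>) = (\<lambda>\<omega>. Y \<omega> + \<gamma> m *\<^sub>R X m \<omega>)"
    using assms(3) by (simp add: Y_def sum.remove add.commute)
  have "continuous_on UNIV (\<lambda>p. snd p + \<gamma> m *\<^sub>R fst p :: 'a)"
    by (intro continuous_intros)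
  then have "y + \<gamma> m *\<^sub>R x \<in> rv_supp M (\<lambda>\<omega>. \<Sum>n\<in>{1..N}. \<gamma> n *\<^sub>R X n \<omega>)"
    if "x \<in> rv_supp M (X m)" for x
    unfolding sum_eq using rv_supp_indep_continuous[OF indep, of "\<lambda>x y. y + \<gamma> m *\<^sub>R x"] that y
    by simp
  then have "(\<lambda>x. y + \<gamma> m *\<^sub>R x) ` interior (rv_supp M (X m))
      \<subseteq> rv_supp M (\<lambda>\<omega>. \<Sum>n\<in>{1..N}. \<gamma> n *\<^sub>R X n \<omega>)"
    using interior_subset by blast
  moreover have "open ((\<lambda>x. y + \<gamma> m *\<^sub>R x) ` interior (rv_supp M (X m)))"
    using assms(4) by (simp add: open_affinity)
  ultimately have "(\<lambda>x. y + \<gamma> m *\<^sub>R x) ` interior (rv_supp M (X m))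
      \<subseteq> interior (rv_supp M (\<lambda>\<omega>. \<Sum>n\<in>{1..N}. \<gamma> n *\<^sub>R X n \<omega>))"
    by (rule interior_maximal)
  then show ?thesis
    using assms(5) by (auto simp: non_degenerate_def)
qed

end
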